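(* Let $(u^\ast,W^\ast)$ be the minimizer of $f(u,W)$ (so that $u_i^\ast=\log(1+\sum_{k\ne y_i}e^{x_i^\top(w_k^\ast-w_{y_i}^\ast)})$). Then for every $i$, $u_i^\ast\le B_u$, where $B_u=\log(1+(K-1)e^{2B_xB_W})$, $B_x=\max_i\|x_i\|_2$ and $B_W^2=\frac{2}{\mu}N\log K$.
   Context: Data: $(y_i,x_i)$, $i=1,\dots,N$, $x_i\in\mathbb{R}^D$, $y_i\in\{1,\dots,K\}$, $K\ge 2$; $\mu>0$; $u\in\mathbb{R}^N$, $W=[w_1,\dots,w_K]\in\mathbb{R}^{D\times K}$ with Frobenius norm $\|W\|_2$; $$f(u,W)=\sum_{i=1}^N\Big[u_i+e^{-u_i}+\sum_{k\ne y_i}e^{x_i^\top(w_k-w_{y_i})-u_i}\Big]+\tfrac{\mu}{2}\|W\|_2^2.$$ *)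

theory Defs
  imports "HOL-Analysis.Analysis"
begin

text \<open>W is represented as a K-indexed family of columns w_k in R^D, so that W $ k = w_k and
  norm W is the Frobenius norm of the D x K matrix.\<close>

definition obj :: "real \<Rightarrow> ('n::finite \<Rightarrow> 'k::finite) \<Rightarrow> ('n \<Rightarrow> real^'d::finite)
    \<Rightarrow> real^'n \<Rightarrow> (real^'d)^'k \<Rightarrow> real" where
  "obj \<mu> y x u W =
     (\<Sum>i\<in>UNIV. u $ i + exp (- (u $ i))
        + (\<Sum>k\<in>UNIV - {y i}. exp (x i \<bullet> (W $ k - W $ (y i)) - u $ i)))
     + \<mu> / 2 * (norm W)\<^sup>2"

end

theory Submission
  imports Defs
begin

text \<open>Minimising over u alone gives u_i = ln (1 + S_i), where S_i is the sum of the
  exponentiated margins of data point i. Comparing the minimum with the value at u = ln K,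
  W = 0 bounds the regulariser, so norm W \<le> B_W; Cauchy-Schwarz then gives
  S_i \<le> (K - 1) exp (2 B_x B_W).\<close>

definition margin_sum :: "('n::finite \<Rightarrow> 'k::finite) \<Rightarrow> ('n \<Rightarrow> real^'d::finite)
    \<Rightarrow> (real^'d)^'k \<Rightarrow> 'n \<Rightarrow> real" where
  "margin_sum y x W i = (\<Sum>k\<in>UNIV - {y i}. exp (x i \<bullet> (W $ k - W $ y i)))"

lemma margin_sum_nonneg: "margin_sum y x W i \<ge> 0"
  unfolding margin_sum_def by (auto intro: sum_nonneg)

lemma margin_sum_zero: "margin_sum y x 0 i = real CARD('k) - 1"
  for y :: "'n::finite \<Rightarrow> 'k::finite"
  unfolding margin_sum_def by (simp add: card_Diff_singleton)

lemma obj_eq_margin_sum: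
  "obj \<mu> y x u W =
     (\<Sum>i\<in>UNIV. u $ i + exp (- (u $ i)) * (1 + margin_sum y x W i)) + \<mu> / 2 * (norm W)\<^sup>2"
proof -
  have "(\<Sum>k\<in>UNIV - {y i}. exp (x i \<bullet> (W $ k - W $ y i) - u $ i))
        = exp (- (u $ i)) * margin_sum y x W i" for i
    unfolding margin_sum_def sum_distrib_left
    by (rule sum.cong) (auto simp: exp_diff exp_minus field_simps)
  then show ?thesis unfolding obj_def by (simp add: algebra_simps)
qed

lemma ln_plus_one_le_add_exp_minus:
  fixes A t :: real
  assumes "A > 0"
  shows "1 + ln A \<le> t + exp (- t) * A"
proof -
  have "exp (- t) * A = exp (- (t - ln A))"
    using assms by (simp add: exp_diff exp_minus field_simps)
  then show ?thesis using exp_minus_ge[of "t - ln A"] by simp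
qed

lemma ln_plus_one_less_add_exp_minus:
  fixes A t :: real
  assumes "A > 0" "t \<noteq> ln A"
  shows "1 + ln A < t + exp (- t) * A"
proof -
  have "exp (- t) * A = exp (- (t - ln A))"
    using assms by (simp add: exp_diff exp_minus field_simps)
  then show ?thesis using exp_minus_greater[of "t - ln A"] assms(2) by simp
qed

lemma minimizer_u_eq:
  assumes minimizer: "\<forall>u W. obj \<mu> y x us Ws \<le> obj \<mu> y x u W"
  shows "us $ i = ln (1 + margin_sum y x Ws i)"
proof (rule ccontr)
  assume ne: "us $ i \<noteq> ln (1 + margin_sum y x Ws i)"
  define F where "F j t = t + exp (- t) * (1 + margin_sum y x Ws j)" for j t
  define u' where "u' = (\<chi> j. if j = i then ln (1 + margin_sum y x Ws i) else us $ j)"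
  have "F i (u' $ i) < F i (us $ i)"
    using ln_plus_one_less_add_exp_minus[OF _ ne] margin_sum_nonneg[of y x Ws i]
    by (simp add: F_def u'_def add_pos_nonneg exp_minus)
  moreover have "u' $ j = us $ j" if "j \<in> UNIV - {i}" for j
    using that by (simp add: u'_def)
  ultimately have "(\<Sum>j\<in>UNIV. F j (u' $ j)) < (\<Sum>j\<in>UNIV. F j (us $ j))"
    by (simp add: sum.remove[of UNIV i])
  then have "obj \<mu> y x u' Ws < obj \<mu> y x us Ws"
    by (simp add: obj_eq_margin_sum F_def)
  with minimizer show False by (meson not_le)
qed

text \<open>The comparison point u = ln K, W = 0 has objective N (1 + ln K), while every summand
  of the objective is at least 1.\<close>

lemma minimizer_norm_bound:
  fixes y :: "'n::finite \<Rightarrow> 'k::finite"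
  assumes "\<mu> > 0"
    and minimizer: "\<forall>u W. obj \<mu> y x us Ws \<le> obj \<mu> y x u W"
  shows "(norm Ws)\<^sup>2 \<le> 2 / \<mu> * real CARD('n) * ln (real CARD('k))"
proof -
  define K where "K = real CARD('k)"
  have K: "K \<ge> 1" unfolding K_def by simp
  have summand_ge: "1 \<le> t + exp (- t) * (1 + margin_sum y x Ws j)" for t j
    using ln_plus_one_le_add_exp_minus[of "1 + margin_sum y x Ws j" t] margin_sum_nonneg[of y x Ws j]
    by (smt (verit) ln_ge_zero)
  have "real CARD('n) + \<mu> / 2 * (norm Ws)\<^sup>2 \<le> obj \<mu> y x us Ws"
    using sum_mono[of UNIV "\<lambda>_. 1", OF summand_ge] by (simp add: obj_eq_margin_sum)
  also have "\<dots> \<le> obj \<mu> y x (\<chi> j. ln K) 0"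
    using minimizer by blast
  also have "\<dots> = real CARD('n) * (1 + ln K)"
    using K by (simp add: obj_eq_margin_sum margin_sum_zero K_def[symmetric] exp_minus)
  finally show ?thesis
    using assms(1) by (simp add: K_def field_simps)
qed

lemma inner_column_diff_le:
  fixes W :: "(real^'d::finite)^'k::finite"
  shows "v \<bullet> (W $ k - W $ l) \<le> 2 * norm v * norm W"
proof -
  have "norm (W $ k - W $ l) \<le> norm (W $ k) + norm (W $ l)"
    by (rule norm_triangle_ineq4)
  also have "\<dots> \<le> 2 * norm W"
    using Finite_Cartesian_Product.norm_nth_le[of W k] Finite_Cartesian_Product.norm_nth_le[of W l]
    by simp
  finally have "norm v * norm (W $ k - W $ l) \<le> norm v * (2 * norm W)"
    by (simp add: mult_left_mono)
  with norm_cauchy_schwarz[of v "W $ k - W $ l"] show ?thesis by simp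
qed

lemma margin_sum_le:
  fixes y :: "'n::finite \<Rightarrow> 'k::finite"
  shows "margin_sum y x W i \<le> (real CARD('k) - 1) * exp (2 * norm (x i) * norm W)"
proof -
  have "margin_sum y x W i \<le> (\<Sum>k\<in>UNIV - {y i}. exp (2 * norm (x i) * norm W))"
    unfolding margin_sum_def by (intro sum_mono) (simp add: inner_column_diff_le)
  also have "\<dots> = (real CARD('k) - 1) * exp (2 * norm (x i) * norm W)"
    by (simp add: card_Diff_singleton)
  finally show ?thesis .
qed

theorem lemma2:
  fixes \<mu> :: real and y :: "'n::finite \<Rightarrow> 'k::finite" and x :: "'n \<Rightarrow> real^'d::finite"
    and us :: "real^'n" and Ws :: "(real^'d)^'k"
  assumes K2: "CARD('k) \<ge> 2"
    and mu: "\<mu> > 0"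
    and minimizer: "\<forall>u W. obj \<mu> y x us Ws \<le> obj \<mu> y x u W"
  shows "\<forall>i. us $ i \<le>
     (let Bx = Max (range (\<lambda>j. norm (x j)));
          BW = sqrt (2 / \<mu> * real CARD('n) * ln (real CARD('k)))
      in ln (1 + (real CARD('k) - 1) * exp (2 * Bx * BW)))"
proof (intro allI)
  fix i
  define Bx where "Bx = Max (range (\<lambda>j. norm (x j)))"
  define BW where "BW = sqrt (2 / \<mu> * real CARD('n) * ln (real CARD('k)))"
  have "norm Ws \<le> BW"
    using minimizer_norm_bound[OF mu minimizer] by (simp add: BW_def real_le_rsqrt)
  moreover have "norm (x i) \<le> Bx"
    unfolding Bx_def by (rule Max_ge) auto
  ultimately have "exp (2 * norm (x i) * norm Ws) \<le> exp (2 * Bx * BW)"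
    by (simp add: mult_mono')
  then have "margin_sum y x Ws i \<le> (real CARD('k) - 1) * exp (2 * Bx * BW)"
    using margin_sum_le[of y x Ws i] K2 order_trans mult_left_mono by fastforce
  then show "us $ i \<le> (let Bx = Max (range (\<lambda>j. norm (x j)));
          BW = sqrt (2 / \<mu> * real CARD('n) * ln (real CARD('k)))
      in ln (1 + (real CARD('k) - 1) * exp (2 * Bx * BW)))"
    using minimizer_u_eq[OF minimizer, of i] margin_sum_nonneg[of y x Ws i]
    by (simp add: Bx_def BW_def)
qed

end
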